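(* Let $D\subseteq\mathbb{R}^3\setminus\{0\}$ be open, $\Omega=\mathbb{R}^3\times D$, and $\vec\mu(\vec M,\vec\gamma)=(0,0,\mu_3(\vec\gamma,\vec M\cdot\vec\gamma))$ with $\mu_3:D\times\mathbb{R}\to\mathbb{R}$ smooth. Then $\Pi_{\vec\mu}$ defines a Poisson bracket on $\Omega$ if and only if $\gamma_1\frac{\partial\mu_3}{\partial\gamma_2}-\gamma_2\frac{\partial\mu_3}{\partial\gamma_1}=0$ on $D\times\mathbb{R}$ (derivatives with $s=\vec M\cdot\vec\gamma$ held fixed). Moreover, if $\mu_3=\beta(\gamma_3)\delta(s)$ with $\beta$, $\delta$ smooth and $\delta$ nowhere zero, then $\Pi_{\vec\mu}$ defines a Poisson bracket and $C=\Delta(\vec M\cdot\vec\gamma)+B(\gamma_3)$, where $\Delta'=1/\delta$ and $B'=\beta$, is a Casimir function of $\Pi_{\vec\mu}$.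
   Context: Coordinates on $\mathbb{R}^6$ are $(\vec M,\vec\gamma)=(M_1,M_2,M_3,\gamma_1,\gamma_2,\gamma_3)$. For a smooth $\vec\mu=(\mu_1,\mu_2,\mu_3)$ of $(\vec M,\vec\gamma)$, $\Pi_{\vec\mu}$ is the skew-symmetric $6\times6$ matrix $$\Pi_{\vec\mu}=\begin{bmatrix}0&-M_3-\mu_3&M_2+\mu_2&0&-\gamma_3&\gamma_2\\ M_3+\mu_3&0&-M_1-\mu_1&\gamma_3&0&-\gamma_1\\ -M_2-\mu_2&M_1+\mu_1&0&-\gamma_2&\gamma_1&0\\ 0&-\gamma_3&\gamma_2&0&0&0\\ \gamma_3&0&-\gamma_1&0&0&0\\ -\gamma_2&\gamma_1&0&0&0&0\end{bmatrix},$$ it "defines a Poisson bracket" if $\{f,g\}_{\vec\mu}=(\nabla f)^T\Pi_{\vec\mu}\nabla g$ satisfies the Jacobi identity, and a Casimir function is a smooth $C$ with $\Pi_{\vec\mu}\nabla C=0$. *)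

theory Defs
  imports "HOL-Analysis.Analysis"
begin

text \<open>Points of R^6 are pairs (M, gamma) of vectors in R^3.
  C^k and C^infinity (smooth) real functions on an open set, via iterated
  partial (Frechet directional) derivatives along the standard basis.\<close>

fun Ck_on :: "nat \<Rightarrow> 'a::euclidean_space set \<Rightarrow> ('a \<Rightarrow> real) \<Rightarrow> bool" where
  "Ck_on 0 S f = continuous_on S f"
| "Ck_on (Suc k) S f =
     ((\<forall>x\<in>S. f differentiable (at x)) \<and>
      (\<forall>b\<in>Basis. Ck_on k S (\<lambda>x. frechet_derivative f (at x) b)))"

definition smooth_on :: "'a::euclidean_space set \<Rightarrow> ('a \<Rightarrow> real) \<Rightarrow> bool" where
  "smooth_on S f \<longleftrightarrow> (\<forall>k. Ck_on k S f)"

definition e6 :: "nat \<Rightarrow> (real^3) \<times> (real^3)" where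
  "e6 i = [(vector [1,0,0], 0), (vector [0,1,0], 0), (vector [0,0,1], 0),
           (0, vector [1,0,0]), (0, vector [0,1,0]), (0, vector [0,0,1])] ! i"

definition pd :: "nat \<Rightarrow> ((real^3) \<times> (real^3) \<Rightarrow> real) \<Rightarrow> (real^3) \<times> (real^3) \<Rightarrow> real" where
  "pd i f x = frechet_derivative f (at x) (e6 i)"

definition Pi_mu :: "((real^3) \<times> (real^3) \<Rightarrow> real^3) \<Rightarrow> (real^3) \<times> (real^3) \<Rightarrow> real list list" where
  "Pi_mu mu p = (let M = fst p; g = snd p; m = mu p in
     [[0, -(M$3) - m$3, M$2 + m$2, 0, -(g$3), g$2],
      [M$3 + m$3, 0, -(M$1) - m$1, g$3, 0, -(g$1)],
      [-(M$2) - m$2, M$1 + m$1, 0, -(g$2), g$1, 0],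
      [0, -(g$3), g$2, 0, 0, 0],
      [g$3, 0, -(g$1), 0, 0, 0],
      [-(g$2), g$1, 0, 0, 0, 0]])"

definition pbracket ::
  "((real^3) \<times> (real^3) \<Rightarrow> real^3) \<Rightarrow> ((real^3) \<times> (real^3) \<Rightarrow> real) \<Rightarrow> ((real^3) \<times> (real^3) \<Rightarrow> real)
     \<Rightarrow> (real^3) \<times> (real^3) \<Rightarrow> real" where
  "pbracket mu f g x = (\<Sum>i<6. \<Sum>j<6. pd i f x * (Pi_mu mu x ! i ! j) * pd j g x)"

definition defines_poisson :: "((real^3) \<times> (real^3) \<Rightarrow> real^3) \<Rightarrow> ((real^3) \<times> (real^3)) set \<Rightarrow> bool" where
  "defines_poisson mu \<Omega> \<longleftrightarrow>
     (\<forall>f g h. smooth_on \<Omega> f \<and> smooth_on \<Omega> g \<and> smooth_on \<Omega> h \<longrightarrow>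
        (\<forall>x\<in>\<Omega>. pbracket mu f (pbracket mu g h) x + pbracket mu g (pbracket mu h f) x
                 + pbracket mu h (pbracket mu f g) x = 0))"

definition casimir :: "((real^3) \<times> (real^3) \<Rightarrow> real^3) \<Rightarrow> ((real^3) \<times> (real^3)) set
     \<Rightarrow> ((real^3) \<times> (real^3) \<Rightarrow> real) \<Rightarrow> bool" where
  "casimir mu \<Omega> C \<longleftrightarrow> smooth_on \<Omega> C \<and>
     (\<forall>x\<in>\<Omega>. \<forall>i<6. (\<Sum>j<6. (Pi_mu mu x ! i ! j) * pd j C x) = 0)"

end

theory Submission
  imports Defs
begin

(* The Jacobiator of the bracket {f,g} = grad f . Pi . grad g is computed in two steps.
   (1) A purely algebraic identity (jacobiator_expansion): if Pi is skew-symmetric and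
       the Hessians of f, g, h are symmetric, the second-derivative terms cancel and
       Jac(f,g,h) = sum_{a,b,c} f_a g_b h_c J_abc, where J_abc = sum_j Pi_aj d_j Pi_bc + cyclic
       is the Jacobiator of the structure matrix itself.  Symmetry of the Hessians of smooth
       functions is Schwarz's theorem, proved here from the mean value theorem.
   (2) For mu = (0,0,mu3(gamma, M.gamma)) an explicit computation gives
       J_abc = - eps_abc * (gamma1 d_gamma2 mu3 - gamma2 d_gamma1 mu3), with eps the
       Levi-Civita symbol on the M-indices.  Hence Jac(f,g,h) is the triple product of the
       M-gradients times this "angular derivative" of mu3.
   The equivalence follows: "if" is immediate, and "only if" tests the coordinate functions
   M1, M2, M3 at a point with M.gamma = s (which exists since gamma <> 0).  In the product
   case mu3 = beta(gamma3) delta(s) the angular derivative vanishes, and the Casimir property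
   of Delta(M.gamma) + B(gamma3) is a direct row-by-row computation; its smoothness comes
   from closure properties of the C^k classes (sums, products, composition, 1/delta,
   antiderivatives). *)

lemma frechet_derivative_eq: "(f has_derivative f') (at x) \<Longrightarrow> frechet_derivative f (at x) = f'"
  by (simp add: frechet_derivative_at[symmetric])

lemma linear_real_eq: "linear (L::real \<Rightarrow> real) \<Longrightarrow> L t = t * L 1"
  by (metis linear_scale mult.right_neutral real_scaleR_def)

lemma frechet_derivative_transform_open:
  assumes "open S" "x \<in> S" "\<And>y. y \<in> S \<Longrightarrow> f y = g y" "f differentiable (at x)"
  shows "frechet_derivative g (at x) = frechet_derivative f (at x)"
    "g differentiable (at x)"
proof -
  have "(f has_derivative frechet_derivative f (at x)) (at x)"
    using assms(4) frechet_derivative_works by blast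
  then have "(g has_derivative frechet_derivative f (at x)) (at x)"
    using has_derivative_transform_within_open assms(1-3) by blast
  then show "frechet_derivative g (at x) = frechet_derivative f (at x)"
    "g differentiable (at x)" by (auto simp: frechet_derivative_eq differentiable_def)
qed

lemma has_real_derivative_frechet:
  fixes \<delta> :: "real \<Rightarrow> real"
  assumes "\<delta> differentiable (at x)"
  shows "(\<delta> has_real_derivative frechet_derivative \<delta> (at x) 1) (at x)"
proof -
  have h: "(\<delta> has_derivative frechet_derivative \<delta> (at x)) (at x)"
    using assms frechet_derivative_works by blast
  have "linear (frechet_derivative \<delta> (at x))" using assms linear_frechet_derivative by blast
  then have "frechet_derivative \<delta> (at x) = (*) (frechet_derivative \<delta> (at x) 1)"
    by (intro ext) (metis linear_real_eq mult.commute)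
  then show ?thesis using h by (simp add: has_field_derivative_def)
qed

lemma frechet_derivative_real:
  fixes \<delta> :: "real \<Rightarrow> real"
  assumes "(\<delta> has_real_derivative d) (at x)"
  shows "frechet_derivative \<delta> (at x) b = b * d" "\<delta> differentiable (at x)"
  using assms by (auto simp: has_field_derivative_def frechet_derivative_eq differentiable_def mult.commute)

lemma line_derivative:
  fixes g :: "'a::euclidean_space \<Rightarrow> real"
  assumes "g differentiable (at (y + t *\<^sub>R w))"
  shows "((\<lambda>t. g (y + t *\<^sub>R w)) has_real_derivative frechet_derivative g (at (y + t *\<^sub>R w)) w) (at t)"
proof -
  have G: "(g has_derivative frechet_derivative g (at (y + t *\<^sub>R w))) (at (y + t *\<^sub>R w))"
    using assms frechet_derivative_works by blast
  have L: "((\<lambda>t. y + t *\<^sub>R w) has_derivative (\<lambda>h. h *\<^sub>R w)) (at t)"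
    by (auto intro!: derivative_eq_intros)
  have "((\<lambda>t. g (y + t *\<^sub>R w)) has_derivative (\<lambda>h. frechet_derivative g (at (y + t *\<^sub>R w)) (h *\<^sub>R w))) (at t)"
    using diff_chain_at[OF L G] by (simp add: o_def)
  moreover have "linear (frechet_derivative g (at (y + t *\<^sub>R w)))"
    using assms linear_frechet_derivative by blast
  then have "(\<lambda>h. frechet_derivative g (at (y + t *\<^sub>R w)) (h *\<^sub>R w)) = (*) (frechet_derivative g (at (y + t *\<^sub>R w)) w)"
    by (intro ext) (simp add: linear_scale)
  ultimately show ?thesis by (simp add: has_field_derivative_def)
qed

section \<open>Closure properties of the classes C^k\<close>

lemma Ck_Suc_imp: "Ck_on (Suc k) S f \<Longrightarrow> Ck_on k S f"
proof (induction k arbitrary: f)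
  case 0
  then show ?case
    by (auto intro!: continuous_at_imp_continuous_on differentiable_imp_continuous_within)
next
  case (Suc k)
  then show ?case by auto
qed

lemma smooth_on_differentiable: "smooth_on S f \<Longrightarrow> x \<in> S \<Longrightarrow> f differentiable (at x)"
  by (metis Ck_on.simps(2) smooth_on_def)

lemma Ck_cong: "open S \<Longrightarrow> (\<And>x. x\<in>S \<Longrightarrow> f x = g x) \<Longrightarrow> Ck_on k S f \<Longrightarrow> Ck_on k S g"
proof (induction k arbitrary: f g)
  case 0
  then show ?case using continuous_on_cong by (metis Ck_on.simps(1))
next
  case (Suc k)
  have "Ck_on k S (\<lambda>x. frechet_derivative g (at x) b)" if "b \<in> Basis" for b
  proof (rule Suc.IH[of "\<lambda>x. frechet_derivative f (at x) b"])
    show "Ck_on k S (\<lambda>x. frechet_derivative f (at x) b)" using Suc.prems that by auto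
    fix x assume "x \<in> S"
    then show "frechet_derivative f (at x) b = frechet_derivative g (at x) b"
      using frechet_derivative_transform_open(1)[of S x f g] Suc.prems by auto
  qed (use Suc.prems in auto)
  moreover have "g differentiable (at x)" if "x \<in> S" for x
    using frechet_derivative_transform_open(2)[of S x f g] Suc.prems that by auto
  ultimately show ?case by simp
qed

lemma Ck_const: "Ck_on k S (\<lambda>x. c)"
proof (induction k arbitrary: c)
  case 0 then show ?case by simp
next
  case (Suc k)
  have "(\<lambda>x. frechet_derivative (\<lambda>x. c) (at x) b) = (\<lambda>x. 0)" for b :: 'a
    by (rule ext) (simp add: frechet_derivative_eq)
  then show ?case using Suc by simp
qed

lemma Ck_inner: "Ck_on k S (\<lambda>x. x \<bullet> w)"
proof (cases k)
  case 0 then show ?thesis by (simp add: continuous_on_inner)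
next
  case (Suc m)
  have hd: "((\<lambda>x. x \<bullet> w) has_derivative (\<lambda>h. h \<bullet> w)) (at x)" for x
    by (auto intro!: derivative_eq_intros)
  then have "(\<lambda>x. frechet_derivative (\<lambda>x. x \<bullet> w) (at x) b) = (\<lambda>x. b \<bullet> w)" for b
    by (intro ext) (simp add: frechet_derivative_eq[OF hd])
  then show ?thesis using Suc hd Ck_const by (auto simp: differentiable_def)
qed

lemma Ck_add: "open S \<Longrightarrow> Ck_on k S f \<Longrightarrow> Ck_on k S g \<Longrightarrow> Ck_on k S (\<lambda>x. f x + g x)"
proof (induction k arbitrary: f g)
  case 0 then show ?case by (simp add: continuous_on_add)
next
  case (Suc k)
  have "Ck_on k S (\<lambda>x. frechet_derivative (\<lambda>x. f x + g x) (at x) b)" if "b \<in> Basis" for b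
  proof -
    have "Ck_on k S (\<lambda>x. frechet_derivative f (at x) b + frechet_derivative g (at x) b)"
      using Suc.prems that by (intro Suc.IH) auto
    moreover have "frechet_derivative f (at x) b + frechet_derivative g (at x) b
        = frechet_derivative (\<lambda>x. f x + g x) (at x) b" if "x \<in> S" for x
    proof -
      have "(f has_derivative frechet_derivative f (at x)) (at x)" "(g has_derivative frechet_derivative g (at x)) (at x)"
        using Suc.prems that by (auto simp: frechet_derivative_works[symmetric])
      then have "((\<lambda>x. f x + g x) has_derivative (\<lambda>h. frechet_derivative f (at x) h + frechet_derivative g (at x) h)) (at x)"
        by (rule has_derivative_add)
      then show ?thesis by (simp add: frechet_derivative_eq)
    qed
    ultimately show ?thesis by (rule Ck_cong[OF Suc.prems(1), rotated])
  qed
  moreover have "\<forall>x\<in>S. (\<lambda>x. f x + g x) differentiable (at x)" using Suc.prems by (auto intro: differentiable_add)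
  ultimately show ?case by simp
qed

lemma Ck_mult: "open S \<Longrightarrow> Ck_on k S f \<Longrightarrow> Ck_on k S g \<Longrightarrow> Ck_on k S (\<lambda>x. f x * g x)"
proof (induction k arbitrary: f g)
  case 0 then show ?case by (simp add: continuous_on_mult)
next
  case (Suc k)
  have "Ck_on k S (\<lambda>x. frechet_derivative (\<lambda>x. f x * g x) (at x) b)" if "b \<in> Basis" for b
  proof -
    have "Ck_on k S (\<lambda>x. f x * frechet_derivative g (at x) b + frechet_derivative f (at x) b * g x)"
      using Suc.prems that Ck_Suc_imp[of k S f] Ck_Suc_imp[of k S g]
      by (intro Ck_add Suc.IH) auto
    moreover have "f x * frechet_derivative g (at x) b + frechet_derivative f (at x) b * g x
        = frechet_derivative (\<lambda>x. f x * g x) (at x) b" if "x \<in> S" for x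
    proof -
      have "(f has_derivative frechet_derivative f (at x)) (at x)" "(g has_derivative frechet_derivative g (at x)) (at x)"
        using Suc.prems that by (auto simp: frechet_derivative_works[symmetric])
      then have "((\<lambda>x. f x * g x) has_derivative (\<lambda>h. f x * frechet_derivative g (at x) h + frechet_derivative f (at x) h * g x)) (at x)"
        by (rule has_derivative_mult)
      then show ?thesis by (simp add: frechet_derivative_eq)
    qed
    ultimately show ?thesis by (rule Ck_cong[OF Suc.prems(1), rotated])
  qed
  moreover have "\<forall>x\<in>S. (\<lambda>x. f x * g x) differentiable (at x)" using Suc.prems by (auto intro: differentiable_mult)
  ultimately show ?case by simp
qed

lemma Ck_compose:
  fixes \<phi> :: "real \<Rightarrow> real"
  shows "open S \<Longrightarrow> Ck_on k UNIV \<phi> \<Longrightarrow> Ck_on k S \<psi> \<Longrightarrow> Ck_on k S (\<lambda>x. \<phi> (\<psi> x))"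
proof (induction k arbitrary: \<phi> \<psi>)
  case 0 then show ?case
    by (simp add: continuous_on_compose2[of UNIV \<phi> S \<psi>])
next
  case (Suc k)
  define \<phi>' where "\<phi>' = (\<lambda>t. frechet_derivative \<phi> (at t) 1)"
  have p': "Ck_on k UNIV \<phi>'" using Suc.prems(2) by (simp add: \<phi>'_def)
  have "Ck_on k S (\<lambda>x. frechet_derivative (\<lambda>x. \<phi> (\<psi> x)) (at x) b)" if "b \<in> Basis" for b
  proof -
    have "Ck_on k S (\<lambda>x. \<phi>' (\<psi> x) * frechet_derivative \<psi> (at x) b)"
      using Suc.prems that p' Ck_Suc_imp[of k S \<psi>] by (intro Ck_mult Suc.IH[of \<phi>' \<psi>]) auto
    moreover have "\<phi>' (\<psi> x) * frechet_derivative \<psi> (at x) b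
        = frechet_derivative (\<lambda>x. \<phi> (\<psi> x)) (at x) b" if "x \<in> S" for x
    proof -
      have "(\<psi> has_derivative frechet_derivative \<psi> (at x)) (at x)"
        "(\<phi> has_derivative frechet_derivative \<phi> (at (\<psi> x))) (at (\<psi> x))"
        using Suc.prems that by (auto simp: frechet_derivative_works[symmetric])
      from diff_chain_at[OF this]
      have "((\<lambda>x. \<phi> (\<psi> x)) has_derivative (\<lambda>h. frechet_derivative \<phi> (at (\<psi> x)) (frechet_derivative \<psi> (at x) h))) (at x)"
        by (simp add: o_def)
      moreover have "linear (frechet_derivative \<phi> (at (\<psi> x)))"
        using Suc.prems(2) linear_frechet_derivative by auto
      ultimately show ?thesis
        using linear_real_eq[of "frechet_derivative \<phi> (at (\<psi> x))" "frechet_derivative \<psi> (at x) b"]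
        by (simp add: frechet_derivative_eq \<phi>'_def mult.commute)
    qed
    ultimately show ?thesis by (rule Ck_cong[OF Suc.prems(1), rotated])
  qed
  moreover have "\<forall>x\<in>S. (\<lambda>x. \<phi> (\<psi> x)) differentiable (at x)"
    using Suc.prems differentiable_chain_at[of \<psi> _ \<phi>] by (auto simp: o_def)
  ultimately show ?case by simp
qed

text \<open>1/\<delta> is C^k along with \<delta>, since (1/\<delta>)' = -\<delta>' (1/\<delta>)(1/\<delta>) is again a product of C^(k-1) functions.\<close>
lemma Ck_reciprocal:
  fixes \<delta> :: "real \<Rightarrow> real"
  assumes nz: "\<forall>t. \<delta> t \<noteq> 0"
  shows "Ck_on k UNIV \<delta> \<Longrightarrow> Ck_on k UNIV (\<lambda>t. 1 / \<delta> t)"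
proof (induction k)
  case 0
  then show ?case using nz by (simp add: continuous_on_divide)
next
  case (Suc k)
  have ih: "Ck_on k UNIV (\<lambda>t. 1 / \<delta> t)" by (rule Suc.IH[OF Ck_Suc_imp[OF Suc.prems]])
  have dd: "((\<lambda>t. 1 / \<delta> t) has_real_derivative
      (-1) * frechet_derivative \<delta> (at x) 1 * ((1 / \<delta> x) * (1 / \<delta> x))) (at x)" for x
  proof -
    have "\<delta> differentiable (at x)" using Suc.prems by simp
    from DERIV_inverse_fun[OF has_real_derivative_frechet[OF this] nz[rule_format, of x]]
    show ?thesis by (simp add: divide_inverse power2_eq_square)
  qed
  have d': "Ck_on k UNIV (\<lambda>x. frechet_derivative \<delta> (at x) 1)" using Suc.prems by simp
  have "Ck_on k UNIV (\<lambda>x. (-1) * frechet_derivative \<delta> (at x) 1 * ((1 / \<delta> x) * (1 / \<delta> x)))"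
    by (intro Ck_mult[OF open_UNIV] Ck_const d' ih)
  moreover have "(\<lambda>x. frechet_derivative (\<lambda>t. 1 / \<delta> t) (at x) b)
      = (\<lambda>x. (-1) * frechet_derivative \<delta> (at x) 1 * ((1 / \<delta> x) * (1 / \<delta> x)))" if "b \<in> Basis" for b
    using that frechet_derivative_real(1)[OF dd, of _ b] by auto
  moreover have "\<forall>x. (\<lambda>t. 1 / \<delta> t) differentiable (at x)" using frechet_derivative_real(2)[OF dd] by blast
  ultimately show ?case by simp
qed

lemma smooth_antiderivative:
  fixes F f :: "real \<Rightarrow> real"
  assumes dF: "\<forall>s. (F has_real_derivative f s) (at s)" and sf: "smooth_on UNIV f"
  shows "smooth_on UNIV F"
  unfolding smooth_on_def
proof
  fix k
  have "(\<lambda>x. frechet_derivative F (at x) b) = f" if "b \<in> Basis" for b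
    using that frechet_derivative_real(1)[OF dF[rule_format]] by auto
  moreover have "\<forall>x. F differentiable (at x)" using frechet_derivative_real(2)[OF dF[rule_format]] by blast
  ultimately have "Ck_on (Suc k) UNIV F" using sf by (simp add: smooth_on_def)
  then show "Ck_on k UNIV F" by (rule Ck_Suc_imp)
qed

section \<open>Symmetry of second derivatives (Schwarz)\<close>

lemma second_difference_mvt:
  fixes f :: "'a::euclidean_space \<Rightarrow> real"
  assumes h: "0 < h"
    and box: "\<And>s t. 0 \<le> s \<Longrightarrow> s \<le> h \<Longrightarrow> 0 \<le> t \<Longrightarrow> t \<le> h \<Longrightarrow> x + s *\<^sub>R u + t *\<^sub>R v \<in> S"
    and df: "\<forall>y\<in>S. f differentiable (at y)"
    and du: "\<forall>y\<in>S. (\<lambda>z. frechet_derivative f (at z) u) differentiable (at y)"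
  shows "\<exists>\<xi> \<eta>. 0 < \<xi> \<and> \<xi> < h \<and> 0 < \<eta> \<and> \<eta> < h \<and>
     f (x + h *\<^sub>R u + h *\<^sub>R v) - f (x + h *\<^sub>R u) - f (x + h *\<^sub>R v) + f x
       = h * h * frechet_derivative (\<lambda>z. frechet_derivative f (at z) u) (at (x + \<xi> *\<^sub>R u + \<eta> *\<^sub>R v)) v"
proof -
  define fu where "fu = (\<lambda>z. frechet_derivative f (at z) u)"
  define P where "P = (\<lambda>s t. x + s *\<^sub>R u + t *\<^sub>R v)"
  have Pu: "P s t = (x + t *\<^sub>R v) + s *\<^sub>R u" for s t by (simp add: P_def algebra_simps)
  have Pv: "P s t = (x + s *\<^sub>R u) + t *\<^sub>R v" for s t by (simp add: P_def)
  define g where "g = (\<lambda>s. f (P s h) - f (P s 0))"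
  have g_deriv: "(g has_real_derivative (fu (P s h) - fu (P s 0))) (at s)" if "0 \<le> s" "s \<le> h" for s
  proof -
    have "P s h \<in> S" "P s 0 \<in> S" using box[of s h] box[of s 0] that h unfolding P_def by auto
    then have "((\<lambda>s. f ((x + h *\<^sub>R v) + s *\<^sub>R u)) has_real_derivative fu (P s h)) (at s)"
      "((\<lambda>s. f ((x + 0 *\<^sub>R v) + s *\<^sub>R u)) has_real_derivative fu (P s 0)) (at s)"
      using line_derivative[of f "x + h *\<^sub>R v" s u] line_derivative[of f "x + 0 *\<^sub>R v" s u] df
      by (simp_all add: fu_def Pu)
    from DERIV_diff[OF this] show ?thesis by (simp add: g_def Pu)
  qed
  obtain \<xi> where \<xi>: "0 < \<xi>" "\<xi> < h" "g h - g 0 = (h - 0) * (fu (P \<xi> h) - fu (P \<xi> 0))"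
    using MVT2[of 0 h g "\<lambda>s. fu (P s h) - fu (P s 0)"] h g_deriv by auto
  define k where "k = (\<lambda>t. fu (P \<xi> t))"
  have k_deriv: "(k has_real_derivative frechet_derivative fu (at (P \<xi> t)) v) (at t)"
    if "0 \<le> t" "t \<le> h" for t
  proof -
    have "P \<xi> t \<in> S" using box[of \<xi> t] that \<xi> unfolding P_def by auto
    then show ?thesis
      using line_derivative[of fu "x + \<xi> *\<^sub>R u" t v] du by (simp add: fu_def Pv k_def)
  qed
  obtain \<eta> where \<eta>: "0 < \<eta>" "\<eta> < h" "k h - k 0 = (h - 0) * frechet_derivative fu (at (P \<xi> \<eta>)) v"
    using MVT2[of 0 h k "\<lambda>t. frechet_derivative fu (at (P \<xi> t)) v"] h k_deriv by auto
  have "f (x + h *\<^sub>R u + h *\<^sub>R v) - f (x + h *\<^sub>R u) - f (x + h *\<^sub>R v) + f x = g h - g 0"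
    by (simp add: g_def P_def)
  also have "\<dots> = h * (k h - k 0)" using \<xi> by (simp add: k_def)
  also have "\<dots> = h * h * frechet_derivative fu (at (P \<xi> \<eta>)) v" using \<eta> by simp
  finally show ?thesis using \<xi> \<eta> by (auto simp: P_def fu_def)
qed

text \<open>Comparing the two mean value representations of the same second difference:
  arbitrarily close to x, the mixed derivatives \<partial>_v \<partial>_u f and \<partial>_u \<partial>_v f take equal values.\<close>
lemma mixed_derivatives_meet:
  fixes f :: "'a::euclidean_space \<Rightarrow> real"
  assumes S: "open S" "x \<in> S" and d: "d > 0"
    and df: "\<forall>y\<in>S. f differentiable (at y)"
    and du: "\<forall>y\<in>S. (\<lambda>z. frechet_derivative f (at z) u) differentiable (at y)"
    and dv: "\<forall>y\<in>S. (\<lambda>z. frechet_derivative f (at z) v) differentiable (at y)"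
  shows "\<exists>y y'. dist y x < d \<and> dist y' x < d \<and>
     frechet_derivative (\<lambda>z. frechet_derivative f (at z) u) (at y) v
       = frechet_derivative (\<lambda>z. frechet_derivative f (at z) v) (at y') u"
proof -
  obtain r where r: "r > 0" "ball x r \<subseteq> S" using S open_contains_ball by blast
  define N where "N = norm u + norm v + 1"
  have N: "N > 0" "norm u + norm v < N" "norm v + norm u < N" by (auto simp: N_def intro: add_nonneg_pos)
  define h where "h = min r d / (2 * N)"
  have h: "h > 0" using d r N by (simp add: h_def)
  have close: "dist (x + s *\<^sub>R a + t *\<^sub>R b) x < min r d"
    if "0 \<le> s" "s \<le> h" "0 \<le> t" "t \<le> h" "norm a + norm b < N" for s t a b
  proof -
    have "dist (x + s *\<^sub>R a + t *\<^sub>R b) x = norm (s *\<^sub>R a + t *\<^sub>R b)" by (simp add: dist_norm)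
    also have "\<dots> \<le> s * norm a + t * norm b"
      using norm_triangle_ineq[of "s *\<^sub>R a" "t *\<^sub>R b"] that by simp
    also have "\<dots> \<le> h * norm a + h * norm b"
      using that by (intro add_mono mult_right_mono) auto
    also have "\<dots> \<le> h * N" using that h by (simp add: distrib_left[symmetric])
    also have "\<dots> < min r d" using d r N by (auto simp: h_def min_def)
    finally show ?thesis .
  qed
  have box: "x + s *\<^sub>R a + t *\<^sub>R b \<in> S"
    if "0 \<le> s" "s \<le> h" "0 \<le> t" "t \<le> h" "norm a + norm b < N" for s t a b
    using close[OF that] r by (auto simp: dist_commute)
  obtain \<xi> \<eta> where p: "0 < \<xi>" "\<xi> < h" "0 < \<eta>" "\<eta> < h"
    "f (x + h *\<^sub>R u + h *\<^sub>R v) - f (x + h *\<^sub>R u) - f (x + h *\<^sub>R v) + f x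
       = h * h * frechet_derivative (\<lambda>z. frechet_derivative f (at z) u) (at (x + \<xi> *\<^sub>R u + \<eta> *\<^sub>R v)) v"
    using second_difference_mvt[OF h box df du] N by blast
  obtain \<xi>' \<eta>' where q: "0 < \<xi>'" "\<xi>' < h" "0 < \<eta>'" "\<eta>' < h"
    "f (x + h *\<^sub>R v + h *\<^sub>R u) - f (x + h *\<^sub>R v) - f (x + h *\<^sub>R u) + f x
       = h * h * frechet_derivative (\<lambda>z. frechet_derivative f (at z) v) (at (x + \<xi>' *\<^sub>R v + \<eta>' *\<^sub>R u)) u"
    using second_difference_mvt[OF h box df dv] N by blast
  have comm: "x + h *\<^sub>R v + h *\<^sub>R u = x + h *\<^sub>R u + h *\<^sub>R v" by (simp add: algebra_simps)
  have "h * h * frechet_derivative (\<lambda>z. frechet_derivative f (at z) u) (at (x + \<xi> *\<^sub>R u + \<eta> *\<^sub>R v)) v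
      = h * h * frechet_derivative (\<lambda>z. frechet_derivative f (at z) v) (at (x + \<xi>' *\<^sub>R v + \<eta>' *\<^sub>R u)) u"
    using p(5) q(5)[unfolded comm] by linarith
  then have meet: "frechet_derivative (\<lambda>z. frechet_derivative f (at z) u) (at (x + \<xi> *\<^sub>R u + \<eta> *\<^sub>R v)) v
       = frechet_derivative (\<lambda>z. frechet_derivative f (at z) v) (at (x + \<xi>' *\<^sub>R v + \<eta>' *\<^sub>R u)) u"
    using h by simp
  have near1: "dist (x + \<xi> *\<^sub>R u + \<eta> *\<^sub>R v) x < d"
    using close[of \<xi> \<eta> u v] p(1-4) N(2) by (simp add: less_imp_le)
  have near2: "dist (x + \<xi>' *\<^sub>R v + \<eta>' *\<^sub>R u) x < d"
    using close[of \<xi>' \<eta>' v u] q(1-4) N(3) by (simp add: less_imp_le)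
  show ?thesis
    by (intro exI[of _ "x + \<xi> *\<^sub>R u + \<eta> *\<^sub>R v"] exI[of _ "x + \<xi>' *\<^sub>R v + \<eta>' *\<^sub>R u"] conjI near1 near2 meet)
qed

lemma mixed_derivatives_symmetric:
  fixes f :: "'a::euclidean_space \<Rightarrow> real"
  assumes S: "open S" "x \<in> S"
    and df: "\<forall>y\<in>S. f differentiable (at y)"
    and du: "\<forall>y\<in>S. (\<lambda>z. frechet_derivative f (at z) u) differentiable (at y)"
    and dv: "\<forall>y\<in>S. (\<lambda>z. frechet_derivative f (at z) v) differentiable (at y)"
    and cuv: "continuous_on S (\<lambda>y. frechet_derivative (\<lambda>z. frechet_derivative f (at z) u) (at y) v)"
    and cvu: "continuous_on S (\<lambda>y. frechet_derivative (\<lambda>z. frechet_derivative f (at z) v) (at y) u)"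
  shows "frechet_derivative (\<lambda>z. frechet_derivative f (at z) u) (at x) v
       = frechet_derivative (\<lambda>z. frechet_derivative f (at z) v) (at x) u"
proof (rule ccontr)
  define A where "A = (\<lambda>y. frechet_derivative (\<lambda>z. frechet_derivative f (at z) u) (at y) v)"
  define B where "B = (\<lambda>y. frechet_derivative (\<lambda>z. frechet_derivative f (at z) v) (at y) u)"
  assume "\<not> ?thesis"
  then have e: "\<bar>A x - B x\<bar> / 2 > 0" by (simp add: A_def B_def)
  have "isCont A x" using cuv S continuous_on_eq_continuous_at unfolding A_def by blast
  then obtain d1 where d1: "d1 > 0" "\<And>y. dist y x < d1 \<Longrightarrow> dist (A y) (A x) < \<bar>A x - B x\<bar> / 2"
    using e unfolding continuous_at_eps_delta by blast
  have "isCont B x" using cvu S continuous_on_eq_continuous_at unfolding B_def by blast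
  then obtain d2 where d2: "d2 > 0" "\<And>y. dist y x < d2 \<Longrightarrow> dist (B y) (B x) < \<bar>A x - B x\<bar> / 2"
    using e unfolding continuous_at_eps_delta by blast
  have "min d1 d2 > 0" using d1 d2 by simp
  then obtain y y' where near: "dist y x < min d1 d2" "dist y' x < min d1 d2" and meet: "A y = B y'"
    using mixed_derivatives_meet[OF S _ df du dv] unfolding A_def B_def by blast
  then have "\<bar>A y - A x\<bar> < \<bar>A x - B x\<bar> / 2" "\<bar>B y' - B x\<bar> < \<bar>A x - B x\<bar> / 2"
    using d1(2)[of y] d2(2)[of y'] by (auto simp: dist_real_def)
  with meet show False
    using abs_triangle_ineq[of "A x - A y" "B y' - B x"] by (simp add: abs_minus_commute)
qed

section \<open>The Jacobiator of a bracket with skew-symmetric structure matrix\<close>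

text \<open>Jacobiator of a structure matrix P (with derivatives dP j k l = \<partial>_j P_kl), evaluated on
  index triples: J_abc = \<Sum>_j P_aj \<partial>_j P_bc + P_bj \<partial>_j P_ca + P_cj \<partial>_j P_ab.\<close>
definition structure_jacobiator ::
  "nat \<Rightarrow> (nat \<Rightarrow> nat \<Rightarrow> real) \<Rightarrow> (nat \<Rightarrow> nat \<Rightarrow> nat \<Rightarrow> real) \<Rightarrow> nat \<Rightarrow> nat \<Rightarrow> nat \<Rightarrow> real" where
  "structure_jacobiator n P dP a b c = (\<Sum>j<n. P a j * dP j b c + P b j * dP j c a + P c j * dP j a b)"

lemma sum_reorder4:
  "(\<Sum>i<n. \<Sum>j<n. \<Sum>k<n. \<Sum>l<n. F i j k l) = (\<Sum>k<n::nat. \<Sum>l<n. \<Sum>j<n. \<Sum>i<n. F i j k l :: real)"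
proof -
  have "(\<Sum>i<n. \<Sum>j<n. \<Sum>k<n. \<Sum>l<n. F i j k l) = (\<Sum>j<n. \<Sum>i<n. \<Sum>k<n. \<Sum>l<n. F i j k l)"
    by (rule sum.swap)
  also have "\<dots> = (\<Sum>j<n. \<Sum>k<n. \<Sum>l<n. \<Sum>i<n. F i j k l)"
    by (rule sum.cong[OF refl], subst sum.swap, rule sum.cong[OF refl], rule sum.swap)
  also have "\<dots> = (\<Sum>k<n. \<Sum>l<n. \<Sum>j<n. \<Sum>i<n. F i j k l)"
    by (subst sum.swap, rule sum.cong[OF refl], rule sum.swap)
  finally show ?thesis .
qed

lemma sum_rotate3:
  "(\<Sum>i<n::nat. \<Sum>k<n. \<Sum>l<n. F i k l) = (\<Sum>l<n. \<Sum>i<n. \<Sum>k<n. F i k l :: real)"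
  "(\<Sum>i<n::nat. \<Sum>k<n. \<Sum>l<n. F i k l) = (\<Sum>k<n. \<Sum>l<n. \<Sum>i<n. F i k l :: real)"
proof -
  show "(\<Sum>i<n. \<Sum>k<n. \<Sum>l<n. F i k l) = (\<Sum>l<n. \<Sum>i<n. \<Sum>k<n. F i k l)"
    by (subst sum.swap) (rule sum.swap)
  show "(\<Sum>i<n. \<Sum>k<n. \<Sum>l<n. F i k l) = (\<Sum>k<n. \<Sum>l<n. \<Sum>i<n. F i k l)"
    by (subst sum.swap) (rule sum.cong[OF refl], rule sum.swap)
qed

text \<open>The terms of Jac(f,g,h) containing the Hessian of g cancel in pairs, by
  symmetry of the Hessian G and skew-symmetry of P.\<close>
lemma hessian_terms_cancel:
  fixes a c :: "nat \<Rightarrow> real" and G P :: "nat \<Rightarrow> nat \<Rightarrow> real"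
  assumes G: "\<And>j k. j < n \<Longrightarrow> k < n \<Longrightarrow> G j k = G k j"
    and P: "\<And>k l. k < n \<Longrightarrow> l < n \<Longrightarrow> P k l = - P l k"
  shows "(\<Sum>i<n. \<Sum>j<n. a i * P i j * (\<Sum>k<n. \<Sum>l<n. G j k * P k l * c l))
       + (\<Sum>i<n. \<Sum>j<n. c i * P i j * (\<Sum>k<n. \<Sum>l<n. a k * P k l * G j l)) = 0"
proof -
  have first: "(\<Sum>i<n. \<Sum>j<n. a i * P i j * (\<Sum>k<n. \<Sum>l<n. G j k * P k l * c l))
     = (\<Sum>i<n. \<Sum>j<n. \<Sum>k<n. \<Sum>l<n. a i * P i j * G j k * P k l * c l)"
    by (simp add: sum_distrib_left mult.assoc)
  have "(\<Sum>i<n. \<Sum>j<n. c i * P i j * (\<Sum>k<n. \<Sum>l<n. a k * P k l * G j l))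
     = (\<Sum>i<n. \<Sum>j<n. \<Sum>k<n. \<Sum>l<n. c i * P i j * (a k * P k l * G j l))"
    by (simp add: sum_distrib_left)
  also have "\<dots> = (\<Sum>i<n. \<Sum>j<n. \<Sum>k<n. \<Sum>l<n. - (a k * P k l * G l j * P j i * c i))"
  proof (intro sum.cong refl)
    fix i j k l assume "i \<in> {..<n}" "j \<in> {..<n}" "k \<in> {..<n}" "l \<in> {..<n}"
    then have g: "G j l = G l j" and p: "P i j = - P j i"
      using G[of j l] P[of i j] by simp_all
    show "c i * P i j * (a k * P k l * G j l) = - (a k * P k l * G l j * P j i * c i)"
      unfolding g p by (simp add: algebra_simps)
  qed
  also have "\<dots> = (\<Sum>k<n. \<Sum>l<n. \<Sum>j<n. \<Sum>i<n. - (a k * P k l * G l j * P j i * c i))"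
    by (rule sum_reorder4)
  also have "\<dots> = - (\<Sum>k<n. \<Sum>l<n. \<Sum>j<n. \<Sum>i<n. a k * P k l * G l j * P j i * c i)"
    by (simp add: sum_negf)
  finally show ?thesis using first by simp
qed

text \<open>The terms of Jac(f,g,h) containing derivatives of P assemble into the structure Jacobiator.\<close>
lemma structure_terms_collect:
  fixes a b c :: "nat \<Rightarrow> real"
  shows "(\<Sum>i<n. \<Sum>j<n. a i * P i j * (\<Sum>k<n. \<Sum>l<n. b k * dP j k l * c l))
     = (\<Sum>i<n. \<Sum>k<n. \<Sum>l<n. a i * b k * c l * (\<Sum>j<n. P i j * dP j k l))"
proof -
  have "(\<Sum>i<n. \<Sum>j<n. a i * P i j * (\<Sum>k<n. \<Sum>l<n. b k * dP j k l * c l))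
     = (\<Sum>i<n. \<Sum>j<n. \<Sum>k<n. \<Sum>l<n. a i * b k * c l * (P i j * dP j k l))"
    by (simp add: sum_distrib_left algebra_simps)
  also have "\<dots> = (\<Sum>i<n. \<Sum>k<n. \<Sum>l<n. \<Sum>j<n. a i * b k * c l * (P i j * dP j k l))"
    by (rule sum.cong[OF refl], subst sum.swap, rule sum.cong[OF refl], rule sum.swap)
  also have "\<dots> = (\<Sum>i<n. \<Sum>k<n. \<Sum>l<n. a i * b k * c l * (\<Sum>j<n. P i j * dP j k l))"
    by (simp add: sum_distrib_left)
  finally show ?thesis .
qed

text \<open>Write a bracket derivative by the product rule
  as a sum of three kinds of terms (Hessian of the inner function, derivative of P, Hessian
  of the outer function).  With symmetric Hessians F, G, H and skew P, all Hessian terms cancel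
  and only the structure Jacobiator survives.\<close>
lemma jacobiator_algebra:
  fixes fi gi hi :: "nat \<Rightarrow> real" and F G H P :: "nat \<Rightarrow> nat \<Rightarrow> real"
  assumes F: "\<And>j k. j < n \<Longrightarrow> k < n \<Longrightarrow> F j k = F k j"
    and G: "\<And>j k. j < n \<Longrightarrow> k < n \<Longrightarrow> G j k = G k j"
    and H: "\<And>j k. j < n \<Longrightarrow> k < n \<Longrightarrow> H j k = H k j"
    and P: "\<And>k l. k < n \<Longrightarrow> l < n \<Longrightarrow> P k l = - P l k"
  shows "(\<Sum>i<n. \<Sum>j<n. fi i * P i j * (\<Sum>k<n. \<Sum>l<n. G j k * P k l * hi l + gi k * dP j k l * hi l + gi k * P k l * H j l))
       + (\<Sum>i<n. \<Sum>j<n. gi i * P i j * (\<Sum>k<n. \<Sum>l<n. H j k * P k l * fi l + hi k * dP j k l * fi l + hi k * P k l * F j l))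
       + (\<Sum>i<n. \<Sum>j<n. hi i * P i j * (\<Sum>k<n. \<Sum>l<n. F j k * P k l * gi l + fi k * dP j k l * gi l + fi k * P k l * G j l))
     = (\<Sum>a<n. \<Sum>b<n. \<Sum>c<n. fi a * gi b * hi c * structure_jacobiator n P dP a b c)"
proof -
  have split: "(\<Sum>i<n. \<Sum>j<n. a i * P i j * (\<Sum>k<n. \<Sum>l<n. X j k * P k l * c l + b k * dP j k l * c l + b k * P k l * Y j l))
    = (\<Sum>i<n. \<Sum>j<n. a i * P i j * (\<Sum>k<n. \<Sum>l<n. X j k * P k l * c l))
    + (\<Sum>i<n. \<Sum>j<n. a i * P i j * (\<Sum>k<n. \<Sum>l<n. b k * dP j k l * c l))
    + (\<Sum>i<n. \<Sum>j<n. a i * P i j * (\<Sum>k<n. \<Sum>l<n. b k * P k l * Y j l))"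
    for a b c :: "nat \<Rightarrow> real" and X Y :: "nat \<Rightarrow> nat \<Rightarrow> real"
    by (simp add: sum.distrib distrib_left)
  note cancel = hessian_terms_cancel[of n G P fi hi, OF G P] hessian_terms_cancel[of n H P gi fi, OF H P]
    hessian_terms_cancel[of n F P hi gi, OF F P]
  have d1: "(\<Sum>i<n. \<Sum>j<n. fi i * P i j * (\<Sum>k<n. \<Sum>l<n. gi k * dP j k l * hi l))
      = (\<Sum>a<n. \<Sum>b<n. \<Sum>c<n. fi a * gi b * hi c * (\<Sum>j<n. P a j * dP j b c))"
    by (rule structure_terms_collect)
  have d2: "(\<Sum>i<n. \<Sum>j<n. gi i * P i j * (\<Sum>k<n. \<Sum>l<n. hi k * dP j k l * fi l))
      = (\<Sum>a<n. \<Sum>b<n. \<Sum>c<n. fi a * gi b * hi c * (\<Sum>j<n. P b j * dP j c a))"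
    by (rule trans[OF structure_terms_collect trans[OF sum_rotate3(1)]]) (simp add: mult.commute mult.left_commute)
  have d3: "(\<Sum>i<n. \<Sum>j<n. hi i * P i j * (\<Sum>k<n. \<Sum>l<n. fi k * dP j k l * gi l))
      = (\<Sum>a<n. \<Sum>b<n. \<Sum>c<n. fi a * gi b * hi c * (\<Sum>j<n. P c j * dP j a b))"
    by (rule trans[OF structure_terms_collect trans[OF sum_rotate3(2)]]) (simp add: mult.commute mult.left_commute)
  have "(\<Sum>a<n. \<Sum>b<n. \<Sum>c<n. fi a * gi b * hi c * structure_jacobiator n P dP a b c)
     = (\<Sum>a<n. \<Sum>b<n. \<Sum>c<n. fi a * gi b * hi c * (\<Sum>j<n. P a j * dP j b c))
     + (\<Sum>a<n. \<Sum>b<n. \<Sum>c<n. fi a * gi b * hi c * (\<Sum>j<n. P b j * dP j c a))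
     + (\<Sum>a<n. \<Sum>b<n. \<Sum>c<n. fi a * gi b * hi c * (\<Sum>j<n. P c j * dP j a b))"
    by (simp add: structure_jacobiator_def sum.distrib distrib_left)
  then show ?thesis
    unfolding split using cancel d1 d2 d3 by linarith
qed

section \<open>Derivatives of brackets and the Jacobiator of \<Pi>_\<mu>\<close>

lemma less6_cases: "(k::nat) < 6 \<longleftrightarrow> k = 0 \<or> k = 1 \<or> k = 2 \<or> k = 3 \<or> k = 4 \<or> k = 5"
  by auto

lemma lessThan6: "{..<6::nat} = {0,1,2,3,4,5}" by auto

lemma Pi_mu_skew: "k < 6 \<Longrightarrow> l < 6 \<Longrightarrow> Pi_mu mu x ! k ! l = - (Pi_mu mu x ! l ! k)"
  unfolding less6_cases by (auto simp: Pi_mu_def Let_def)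

definition jacobiator ::
  "((real^3) \<times> (real^3) \<Rightarrow> real^3) \<Rightarrow> ((real^3) \<times> (real^3) \<Rightarrow> real) \<Rightarrow> ((real^3) \<times> (real^3) \<Rightarrow> real)
     \<Rightarrow> ((real^3) \<times> (real^3) \<Rightarrow> real) \<Rightarrow> (real^3) \<times> (real^3) \<Rightarrow> real" where
  "jacobiator mu f g h x =
     pbracket mu f (pbracket mu g h) x + pbracket mu g (pbracket mu h f) x + pbracket mu h (pbracket mu f g) x"

lemma defines_poisson_iff_jacobiator:
  "defines_poisson mu \<Omega> \<longleftrightarrow>
     (\<forall>f g h. smooth_on \<Omega> f \<and> smooth_on \<Omega> g \<and> smooth_on \<Omega> h \<longrightarrow> (\<forall>x\<in>\<Omega>. jacobiator mu f g h x = 0))"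
  by (simp add: defines_poisson_def jacobiator_def)

definition hessian_symmetric_at :: "((real^3) \<times> (real^3) \<Rightarrow> real) \<Rightarrow> (real^3) \<times> (real^3) \<Rightarrow> bool" where
  "hessian_symmetric_at f x \<longleftrightarrow>
     (\<forall>k<6. pd k f differentiable (at x)) \<and> (\<forall>j<6. \<forall>k<6. pd j (pd k f) x = pd k (pd j f) x)"

lemma e6_simps: "e6 0 = (vector [1,0,0], 0)" "e6 1 = (vector [0,1,0], 0)" "e6 (Suc 0) = (vector [0,1,0], 0)"
  "e6 2 = (vector [0,0,1], 0)" "e6 3 = (0, vector [1,0,0])" "e6 4 = (0, vector [0,1,0])"
  "e6 5 = (0, vector [0,0,1])"
  by (simp_all add: e6_def)

lemma unit_vectors_axis: "vector [1,0,0] = (axis 1 1 :: real^3)" "vector [0,1,0] = (axis 2 1 :: real^3)"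
  "vector [0,0,1] = (axis 3 1 :: real^3)"
  by (simp_all add: vec_eq_iff forall_3 axis_def)

lemma e6_Basis: "k < 6 \<Longrightarrow> e6 k \<in> Basis"
  unfolding less6_cases by (auto simp: e6_simps unit_vectors_axis Basis_prod_def)

lemma smooth_hessian_symmetric:
  assumes S: "open S" and sm: "smooth_on S f" and x: "x \<in> S"
  shows "hessian_symmetric_at f x"
proof -
  have "Ck_on 2 S f" using sm by (simp add: smooth_on_def)
  then have df: "\<forall>y\<in>S. f differentiable (at y)"
    and C1: "\<forall>b\<in>Basis. Ck_on 1 S (\<lambda>x. frechet_derivative f (at x) b)"
    by (simp_all add: numeral_2_eq_2)
  have dd: "\<forall>y\<in>S. (\<lambda>z. frechet_derivative f (at z) b) differentiable (at y)"
    and cc: "\<forall>b'\<in>Basis. continuous_on S (\<lambda>y. frechet_derivative (\<lambda>z. frechet_derivative f (at z) b) (at y) b')"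
    if "b \<in> Basis" for b
    using C1 that by auto
  have pd_eq: "pd k f = (\<lambda>z. frechet_derivative f (at z) (e6 k))" for k f
    by (rule ext) (simp add: pd_def)
  show ?thesis
    unfolding hessian_symmetric_at_def pd_eq
    using dd x e6_Basis mixed_derivatives_symmetric[OF S x df dd dd] cc by (simp add: pd_def)
qed

lemma pbracket_partial:
  assumes dg: "\<forall>k<6. (pd k g) differentiable (at x)"
    and dh: "\<forall>k<6. (pd k h) differentiable (at x)"
    and dP: "\<forall>k<6. \<forall>l<6. (\<lambda>y. Pi_mu mu y ! k ! l) differentiable (at x)"
  shows "pd j (pbracket mu g h) x = (\<Sum>k<6. \<Sum>l<6.
      pd j (pd k g) x * (Pi_mu mu x ! k ! l) * pd l h x
    + pd k g x * pd j (\<lambda>y. Pi_mu mu y ! k ! l) x * pd l h x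
    + pd k g x * (Pi_mu mu x ! k ! l) * pd j (pd l h) x)"
proof -
  have "(pbracket mu g h has_derivative
     (\<lambda>v. \<Sum>k<6. \<Sum>l<6. pd k g x * (Pi_mu mu x ! k ! l) * frechet_derivative (pd l h) (at x) v
        + (pd k g x * frechet_derivative (\<lambda>y. Pi_mu mu y ! k ! l) (at x) v
           + frechet_derivative (pd k g) (at x) v * (Pi_mu mu x ! k ! l)) * pd l h x)) (at x)"
    unfolding pbracket_def[abs_def]
  proof (intro has_derivative_sum has_derivative_mult)
    fix k l assume "k \<in> {..<6::nat}" "l \<in> {..<6::nat}"
    then show "(pd k g has_derivative frechet_derivative (pd k g) (at x)) (at x)"
      "((\<lambda>y. Pi_mu mu y ! k ! l) has_derivative frechet_derivative (\<lambda>y. Pi_mu mu y ! k ! l) (at x)) (at x)"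
      "(pd l h has_derivative frechet_derivative (pd l h) (at x)) (at x)"
      using dg dh dP by (simp_all add: frechet_derivative_works[symmetric])
  qed
  then show ?thesis
    by (simp add: frechet_derivative_eq pd_def[of j] algebra_simps)
qed

lemma jacobiator_expansion:
  assumes f: "hessian_symmetric_at f x" and g: "hessian_symmetric_at g x"
    and h: "hessian_symmetric_at h x"
    and dP: "\<forall>k<6. \<forall>l<6. (\<lambda>y. Pi_mu mu y ! k ! l) differentiable (at x)"
  shows "jacobiator mu f g h x
    = (\<Sum>a<6. \<Sum>b<6. \<Sum>c<6. pd a f x * pd b g x * pd c h x *
         structure_jacobiator 6 (\<lambda>k l. Pi_mu mu x ! k ! l) (\<lambda>j k l. pd j (\<lambda>y. Pi_mu mu y ! k ! l) x) a b c)"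
proof -
  from f g h have df: "\<forall>k<6. pd k f differentiable (at x)" and dg: "\<forall>k<6. pd k g differentiable (at x)"
    and dh: "\<forall>k<6. pd k h differentiable (at x)"
    and sf: "\<And>j k. j < 6 \<Longrightarrow> k < 6 \<Longrightarrow> pd j (pd k f) x = pd k (pd j f) x"
    and sg: "\<And>j k. j < 6 \<Longrightarrow> k < 6 \<Longrightarrow> pd j (pd k g) x = pd k (pd j g) x"
    and sh: "\<And>j k. j < 6 \<Longrightarrow> k < 6 \<Longrightarrow> pd j (pd k h) x = pd k (pd j h) x"
    unfolding hessian_symmetric_at_def by auto
  show ?thesis
    unfolding jacobiator_def pbracket_def[of mu f "pbracket mu g h"] pbracket_def[of mu g "pbracket mu h f"]
      pbracket_def[of mu h "pbracket mu f g"] pbracket_partial[OF dg dh dP] pbracket_partial[OF dh df dP]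
      pbracket_partial[OF df dg dP]
    by (rule jacobiator_algebra[where F="\<lambda>j k. pd j (pd k f) x" and G="\<lambda>j k. pd j (pd k g) x"
        and H="\<lambda>j k. pd j (pd k h) x", OF sf sg sh Pi_mu_skew])
qed

section \<open>The structure Jacobiator for \<mu> = (0, 0, \<mu>3(\<gamma>, M\<cdot>\<gamma>))\<close>

abbreviation mu_axial :: "((real^3) \<times> real \<Rightarrow> real) \<Rightarrow> (real^3) \<times> (real^3) \<Rightarrow> real^3" where
  "mu_axial mu3 \<equiv> (\<lambda>(M, g). vector [0, 0, mu3 (g, M \<bullet> g)])"

text \<open>The obstruction \<gamma>1 \<partial>\<mu>3/\<partial>\<gamma>2 - \<gamma>2 \<partial>\<mu>3/\<partial>\<gamma>1 (at fixed s): the derivative of \<mu>3 along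
  infinitesimal rotations about the \<gamma>3-axis.\<close>
definition angular_derivative :: "((real^3) \<times> real \<Rightarrow> real) \<Rightarrow> real^3 \<Rightarrow> real \<Rightarrow> real" where
  "angular_derivative mu3 g s =
     g$1 * frechet_derivative mu3 (at (g, s)) (vector [0,1,0], 0)
   - g$2 * frechet_derivative mu3 (at (g, s)) (vector [1,0,0], 0)"

definition levi_civita :: "nat \<Rightarrow> nat \<Rightarrow> nat \<Rightarrow> real" where
  "levi_civita a b c =
     (if (a,b,c) \<in> {(0,1,2),(1,2,0),(2,0,1)} then 1
      else if (a,b,c) \<in> {(0,2,1),(2,1,0),(1,0,2)} then -1 else 0)"

definition axial_matrix :: "real^3 \<Rightarrow> real^3 \<Rightarrow> real \<Rightarrow> real list list" where
  "axial_matrix M g m = [[0, -(M$3) - m, M$2, 0, -(g$3), g$2],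
      [M$3 + m, 0, -(M$1), g$3, 0, -(g$1)],
      [-(M$2), M$1, 0, -(g$2), g$1, 0],
      [0, -(g$3), g$2, 0, 0, 0],
      [g$3, 0, -(g$1), 0, 0, 0],
      [-(g$2), g$1, 0, 0, 0, 0]]"

lemma Pi_mu_axial: "Pi_mu (mu_axial mu3) y = axial_matrix (fst y) (snd y) (mu3 (snd y, fst y \<bullet> snd y))"
  by (cases y) (simp add: Pi_mu_def axial_matrix_def Let_def)

text \<open>The j-th partial of m(M,\<gamma>) = \<mu>3(\<gamma>, M\<cdot>\<gamma>), in terms of the partials p1, p2, p3 of \<mu>3 in \<gamma>
  and q in s: \<partial>m/\<partial>M_i = \<gamma>_i q and \<partial>m/\<partial>\<gamma>_i = p_i + M_i q.\<close>
definition axial_partial :: "real^3 \<Rightarrow> real^3 \<Rightarrow> real \<Rightarrow> real \<Rightarrow> real \<Rightarrow> real \<Rightarrow> nat \<Rightarrow> real" where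
  "axial_partial M g p1 p2 p3 q j = [g$1*q, g$2*q, g$3*q, p1 + M$1*q, p2 + M$2*q, p3 + M$3*q] ! j"

text \<open>The explicit computation: the structure Jacobiator is -\<epsilon>_abc (\<gamma>1 p2 - \<gamma>2 p1); all
  contributions of q, of M, and of m itself cancel.\<close>
lemma structure_jacobiator_axial_matrix:
  assumes "a < 6" "b < 6" "c < 6"
  shows "structure_jacobiator 6 (\<lambda>k l. axial_matrix M g m ! k ! l)
      (\<lambda>j k l. axial_matrix (fst (e6 j)) (snd (e6 j)) (axial_partial M g p1 p2 p3 q j) ! k ! l) a b c
    = - levi_civita a b c * (g$1 * p2 - g$2 * p1)"
  using assms unfolding less6_cases
  by (elim disjE; simp add: structure_jacobiator_def lessThan6 axial_matrix_def e6_simps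
      axial_partial_def levi_civita_def algebra_simps)

lemma has_derivative_fst_component: "((\<lambda>y. fst y $ i) has_derivative (\<lambda>v. fst v $ i)) F"
  by (intro bounded_linear_imp_has_derivative bounded_linear_compose[OF bounded_linear_vec_nth bounded_linear_fst])

lemma has_derivative_snd_component: "((\<lambda>y. snd y $ i) has_derivative (\<lambda>v. snd v $ i)) F"
  by (intro bounded_linear_imp_has_derivative bounded_linear_compose[OF bounded_linear_vec_nth bounded_linear_snd])

text \<open>Since the entries are linear in (M, \<gamma>, m), differentiating an entry along v replaces
  (M, \<gamma>, m) by (fst v, snd v, m'(v)).\<close>
lemma axial_matrix_has_derivative:
  assumes A: "(A has_derivative A') (at x)" and "k < 6" "l < 6"
  shows "((\<lambda>y. axial_matrix (fst y) (snd y) (A y) ! k ! l) has_derivative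
           (\<lambda>v. axial_matrix (fst v) (snd v) (A' v) ! k ! l)) (at x)"
  using assms(2,3) unfolding less6_cases
  by (elim disjE; simp add: axial_matrix_def;
      intro derivative_intros has_derivative_fst_component has_derivative_snd_component A)

lemma axial_entry_has_derivative:
  assumes "mu3 differentiable (at (snd x, fst x \<bullet> snd x))"
  shows "((\<lambda>y. mu3 (snd y, fst y \<bullet> snd y)) has_derivative
     (\<lambda>v. frechet_derivative mu3 (at (snd x, fst x \<bullet> snd x)) (snd v, fst x \<bullet> snd v + fst v \<bullet> snd x))) (at x)"
proof -
  have i: "((\<lambda>y. (snd y, fst y \<bullet> snd y)) has_derivative (\<lambda>v. (snd v, fst x \<bullet> snd v + fst v \<bullet> snd x))) (at x)"
    by (intro derivative_intros)
  have m: "(mu3 has_derivative frechet_derivative mu3 (at (snd x, fst x \<bullet> snd x))) (at (snd x, fst x \<bullet> snd x))"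
    using assms frechet_derivative_works by blast
  show ?thesis using diff_chain_at[OF i m] by (simp add: o_def)
qed

lemma inner_unit_vectors: "vector [1,0,0] \<bullet> (g::real^3) = g$1" "vector [0,1,0] \<bullet> g = g$2"
  "vector [0,0,1] \<bullet> g = g$3" "g \<bullet> vector [1,0,0] = g$1" "g \<bullet> vector [0,1,0] = g$2" "g \<bullet> vector [0,0,1] = g$3"
  by (simp_all add: inner_vec_def sum_3)

lemma linear_pair_split:
  assumes "linear (L :: (real^3) \<times> real \<Rightarrow> real)"
  shows "L (u, t) = L (u, 0) + t * L (0, 1)"
proof -
  have "(u, t) = (u, 0) + t *\<^sub>R (0, 1)" by simp
  then show ?thesis by (metis assms linear_add linear_scale real_scaleR_def)
qed

lemma axial_partial_eq:
  assumes L: "linear (L :: (real^3) \<times> real \<Rightarrow> real)" and j: "j < 6"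
  shows "L (snd (e6 j), M \<bullet> snd (e6 j) + fst (e6 j) \<bullet> g)
    = axial_partial M g (L (vector [1,0,0], 0)) (L (vector [0,1,0], 0)) (L (vector [0,0,1], 0)) (L (0, 1)) j"
proof -
  have s_dir: "L (0, t) = t * L (0, 1)" for t
    using linear_pair_split[OF L, of 0 t] linear_0[OF L, unfolded zero_prod_def] by simp
  note split = linear_pair_split[OF L, of "vector [1,0,0]" "M$1"] linear_pair_split[OF L, of "vector [0,1,0]" "M$2"]
    linear_pair_split[OF L, of "vector [0,0,1]" "M$3"]
  show ?thesis
    using j unfolding less6_cases
    by (elim disjE) (simp_all add: e6_simps axial_partial_def inner_unit_vectors s_dir[of "g$1"] s_dir[of "g$2"]
        s_dir[of "g$3"] split mult.commute)
qed

lemma axial_entry_partial: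
  assumes d: "mu3 differentiable (at (snd x, fst x \<bullet> snd x))" and "k < 6" "l < 6"
  shows "(\<lambda>y. axial_matrix (fst y) (snd y) (mu3 (snd y, fst y \<bullet> snd y)) ! k ! l) differentiable (at x)"
    "pd j (\<lambda>y. axial_matrix (fst y) (snd y) (mu3 (snd y, fst y \<bullet> snd y)) ! k ! l) x
      = axial_matrix (fst (e6 j)) (snd (e6 j)) (frechet_derivative mu3 (at (snd x, fst x \<bullet> snd x))
           (snd (e6 j), fst x \<bullet> snd (e6 j) + fst (e6 j) \<bullet> snd x)) ! k ! l"
proof -
  note h = axial_matrix_has_derivative[OF axial_entry_has_derivative[OF d] assms(2,3)]
  then show "(\<lambda>y. axial_matrix (fst y) (snd y) (mu3 (snd y, fst y \<bullet> snd y)) ! k ! l) differentiable (at x)"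
    by (auto simp: differentiable_def)
  show "pd j (\<lambda>y. axial_matrix (fst y) (snd y) (mu3 (snd y, fst y \<bullet> snd y)) ! k ! l) x
      = axial_matrix (fst (e6 j)) (snd (e6 j)) (frechet_derivative mu3 (at (snd x, fst x \<bullet> snd x))
           (snd (e6 j), fst x \<bullet> snd (e6 j) + fst (e6 j) \<bullet> snd x)) ! k ! l"
    unfolding pd_def frechet_derivative_eq[OF h] by simp
qed

lemma structure_jacobiator_axial:
  assumes d: "mu3 differentiable (at (snd x, fst x \<bullet> snd x))" and abc: "a < 6" "b < 6" "c < 6"
  shows "structure_jacobiator 6 (\<lambda>k l. Pi_mu (mu_axial mu3) x ! k ! l)
     (\<lambda>j k l. pd j (\<lambda>y. Pi_mu (mu_axial mu3) y ! k ! l) x) a b c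
   = - levi_civita a b c * angular_derivative mu3 (snd x) (fst x \<bullet> snd x)"
proof -
  let ?L = "frechet_derivative mu3 (at (snd x, fst x \<bullet> snd x))"
  have lin: "linear ?L" using d linear_frechet_derivative by blast
  have "structure_jacobiator 6 (\<lambda>k l. Pi_mu (mu_axial mu3) x ! k ! l)
     (\<lambda>j k l. pd j (\<lambda>y. Pi_mu (mu_axial mu3) y ! k ! l) x) a b c
   = structure_jacobiator 6 (\<lambda>k l. axial_matrix (fst x) (snd x) (mu3 (snd x, fst x \<bullet> snd x)) ! k ! l)
      (\<lambda>j k l. axial_matrix (fst (e6 j)) (snd (e6 j)) (axial_partial (fst x) (snd x) (?L (vector [1,0,0], 0))
          (?L (vector [0,1,0], 0)) (?L (vector [0,0,1], 0)) (?L (0, 1)) j) ! k ! l) a b c"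
    unfolding structure_jacobiator_def using abc
    by (intro sum.cong refl)
       (simp add: Pi_mu_axial axial_entry_partial(2)[OF d] axial_partial_eq[OF lin])
  also have "\<dots> = - levi_civita a b c * angular_derivative mu3 (snd x) (fst x \<bullet> snd x)"
    by (simp add: structure_jacobiator_axial_matrix[OF abc] angular_derivative_def)
  finally show ?thesis .
qed

lemma jacobiator_axial:
  assumes \<Omega>: "open \<Omega>" "x \<in> \<Omega>"
    and sm: "smooth_on \<Omega> f" "smooth_on \<Omega> g" "smooth_on \<Omega> h"
    and d: "mu3 differentiable (at (snd x, fst x \<bullet> snd x))"
  shows "jacobiator (mu_axial mu3) f g h x
    = - (\<Sum>a<6. \<Sum>b<6. \<Sum>c<6. pd a f x * pd b g x * pd c h x * levi_civita a b c)
        * angular_derivative mu3 (snd x) (fst x \<bullet> snd x)"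
proof -
  have dP: "\<forall>k<6. \<forall>l<6. (\<lambda>y. Pi_mu (mu_axial mu3) y ! k ! l) differentiable (at x)"
    using axial_entry_partial(1)[OF d] by (simp add: Pi_mu_axial)
  have "jacobiator (mu_axial mu3) f g h x = (\<Sum>a<6. \<Sum>b<6. \<Sum>c<6. pd a f x * pd b g x * pd c h x *
      (- levi_civita a b c * angular_derivative mu3 (snd x) (fst x \<bullet> snd x)))"
    unfolding jacobiator_expansion[OF smooth_hessian_symmetric[OF \<Omega>(1) sm(1) \<Omega>(2)]
        smooth_hessian_symmetric[OF \<Omega>(1) sm(2) \<Omega>(2)] smooth_hessian_symmetric[OF \<Omega>(1) sm(3) \<Omega>(2)] dP]
    by (intro sum.cong refl) (simp add: structure_jacobiator_axial[OF d])
  then show ?thesis by (simp add: sum_distrib_right sum_negf mult.assoc)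
qed

lemma pd_inner: "pd k (\<lambda>y. y \<bullet> w) = (\<lambda>y. e6 k \<bullet> w)"
proof (rule ext)
  fix y
  have "((\<lambda>y. y \<bullet> w) has_derivative (\<lambda>h. h \<bullet> w)) (at y)" by (auto intro!: derivative_eq_intros)
  then show "pd k (\<lambda>y. y \<bullet> w) y = e6 k \<bullet> w" by (simp add: pd_def frechet_derivative_eq)
qed

text \<open>For the converse
  the coordinate functions M1, M2, M3 are tested at (s/|\<gamma>|^2 \<gamma>, \<gamma>), where M\<cdot>\<gamma> = s; this is
  where \<gamma> \<noteq> 0 is needed.\<close>
lemma poisson_iff_angular_derivative_vanishes:
  fixes D :: "(real^3) set" and mu3 :: "(real^3) \<times> real \<Rightarrow> real"
  assumes D: "open D" and nz: "0 \<notin> D" and md: "\<And>g s. g \<in> D \<Longrightarrow> mu3 differentiable (at (g, s))"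
  shows "defines_poisson (mu_axial mu3) (UNIV \<times> D) \<longleftrightarrow> (\<forall>g\<in>D. \<forall>s. angular_derivative mu3 g s = 0)"
proof
  have \<Omega>: "open (UNIV \<times> D)" using D by (simp add: open_Times)
  show "defines_poisson (mu_axial mu3) (UNIV \<times> D)" if vanish: "\<forall>g\<in>D. \<forall>s. angular_derivative mu3 g s = 0"
    unfolding defines_poisson_iff_jacobiator
  proof (intro allI impI ballI)
    fix f g h :: "(real^3) \<times> (real^3) \<Rightarrow> real" and x :: "(real^3) \<times> (real^3)"
    assume "smooth_on (UNIV \<times> D) f \<and> smooth_on (UNIV \<times> D) g \<and> smooth_on (UNIV \<times> D) h" "x \<in> UNIV \<times> D"
    then show "jacobiator (mu_axial mu3) f g h x = 0"
      using jacobiator_axial[OF \<Omega>, of x f g h mu3] md vanish by (auto simp: mem_Times_iff)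
  qed
  show "\<forall>g\<in>D. \<forall>s. angular_derivative mu3 g s = 0" if P: "defines_poisson (mu_axial mu3) (UNIV \<times> D)"
  proof (intro ballI allI)
    fix g :: "real^3" and s :: real
    assume gD: "g \<in> D"
    define x where "x = ((s / (g \<bullet> g)) *\<^sub>R g, g)"
    have x: "x \<in> UNIV \<times> D" and Mg: "fst x \<bullet> snd x = s" using gD nz by (auto simp: x_def)
    define coord where "coord = (\<lambda>a (y::(real^3) \<times> (real^3)). y \<bullet> e6 a)"
    have sm: "smooth_on (UNIV \<times> D) (coord a)" for a
      by (simp add: smooth_on_def coord_def Ck_inner)
    have triple: "(\<Sum>a<6. \<Sum>b<6. \<Sum>c<6. pd a (coord 0) x * pd b (coord 1) x * pd c (coord 2) x
        * levi_civita a b c) = 1"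
      by (simp add: coord_def pd_inner lessThan6 e6_simps inner_unit_vectors levi_civita_def)
    have "jacobiator (mu_axial mu3) (coord 0) (coord 1) (coord 2) x = 0"
      using P sm x unfolding defines_poisson_iff_jacobiator by blast
    then show "angular_derivative mu3 g s = 0"
      using jacobiator_axial[OF \<Omega> x sm sm sm] md gD triple Mg by (simp add: x_def)
  qed
qed

section \<open>The product case \<mu>3 = \<beta>(\<gamma>3) \<delta>(s)\<close>

text \<open>\<mu>3 depends on \<gamma> only through \<gamma>3, so its \<gamma>1- and \<gamma>2-derivatives vanish.\<close>
lemma angular_derivative_product:
  fixes D :: "(real^3) set" and mu3 :: "(real^3) \<times> real \<Rightarrow> real" and \<beta> \<delta> :: "real \<Rightarrow> real"
  assumes D: "open D" and sb: "smooth_on UNIV \<beta>" and sd: "smooth_on UNIV \<delta>"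
    and eq: "\<forall>g\<in>D. \<forall>s. mu3 (g, s) = \<beta> (g$3) * \<delta> s" and gD: "g \<in> D"
  shows "angular_derivative mu3 g s = 0"
proof -
  let ?Fb = "frechet_derivative \<beta> (at (g$3))" and ?Fd = "frechet_derivative \<delta> (at s)"
  have b: "(\<beta> has_derivative ?Fb) (at (fst (g, s) $ 3))"
    using smooth_on_differentiable[OF sb, of "g$3"] by (simp add: frechet_derivative_works[symmetric])
  have d: "(\<delta> has_derivative ?Fd) (at (snd (g, s)))"
    using smooth_on_differentiable[OF sd, of s] by (simp add: frechet_derivative_works[symmetric])
  have "((\<lambda>z::(real^3) \<times> real. \<beta> (fst z $ 3) * \<delta> (snd z)) has_derivative
       (\<lambda>v. \<beta> (g$3) * ?Fd (snd v) + ?Fb (fst v $ 3) * \<delta> s)) (at (g, s))"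
    using has_derivative_mult[OF diff_chain_at[OF has_derivative_fst_component b]
        diff_chain_at[OF bounded_linear_imp_has_derivative[OF bounded_linear_snd] d]]
    by (simp add: o_def)
  then have "(mu3 has_derivative (\<lambda>v. \<beta> (g$3) * ?Fd (snd v) + ?Fb (fst v $ 3) * \<delta> s)) (at (g, s))"
    by (rule has_derivative_transform_within_open[OF _ open_Times[OF D open_UNIV]]) (use gD eq in auto)
  moreover have "?Fb 0 = 0" "?Fd 0 = 0"
    using linear_0 linear_frechet_derivative smooth_on_differentiable[OF sb] smooth_on_differentiable[OF sd]
    by blast+
  ultimately show ?thesis by (simp add: angular_derivative_def frechet_derivative_eq)
qed

text \<open>M\<cdot>\<gamma> as a polynomial in the coordinates, so that the C^k closure rules apply.\<close>
lemma inner_Pair_coordinates: "(\<lambda>y::(real^3) \<times> (real^3). fst y \<bullet> snd y) =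
   (\<lambda>y. (y \<bullet> (axis 1 1, 0)) * (y \<bullet> (0, axis 1 1)) + ((y \<bullet> (axis 2 1, 0)) * (y \<bullet> (0, axis 2 1))
        + (y \<bullet> (axis 3 1, 0)) * (y \<bullet> (0, axis 3 1))))"
  by (rule ext) (simp only: inner_Pair_0 inner_axis, simp add: inner_vec_def sum_3)

text \<open>The Casimir candidate is smooth: \<Delta> and B are antiderivatives of the smooth 1/\<delta> and \<beta>,
  composed with the polynomials M\<cdot>\<gamma> and \<gamma>3.\<close>
lemma casimir_candidate_smooth:
  fixes D :: "(real^3) set" and \<beta> \<delta> \<Delta> B :: "real \<Rightarrow> real"
  assumes D: "open D" and sb: "smooth_on UNIV \<beta>" and sd: "smooth_on UNIV \<delta>" and nz: "\<forall>s. \<delta> s \<noteq> 0"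
    and dD: "\<forall>s. (\<Delta> has_real_derivative 1 / \<delta> s) (at s)"
    and dB: "\<forall>t. (B has_real_derivative \<beta> t) (at t)"
  shows "smooth_on (UNIV \<times> D) (\<lambda>(M, g). \<Delta> (M \<bullet> g) + B (g$3))"
  unfolding smooth_on_def
proof
  fix k
  have \<Omega>: "open (UNIV \<times> D)" using D by (simp add: open_Times)
  have "smooth_on UNIV (\<lambda>t. 1 / \<delta> t)"
    using Ck_reciprocal[OF nz] sd by (simp add: smooth_on_def)
  then have cD: "Ck_on k UNIV \<Delta>" and cB: "Ck_on k UNIV B"
    using smooth_antiderivative[OF dD] smooth_antiderivative[OF dB sb] by (simp_all add: smooth_on_def)
  have "Ck_on k (UNIV \<times> D) (\<lambda>y::(real^3) \<times> (real^3). fst y \<bullet> snd y)"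
    unfolding inner_Pair_coordinates by (intro Ck_add[OF \<Omega>] Ck_mult[OF \<Omega>] Ck_inner)
  moreover have "(\<lambda>y::(real^3) \<times> (real^3). snd y $ 3) = (\<lambda>y. y \<bullet> (0, axis 3 1))"
    by (rule ext) (simp add: inner_Pair_0 inner_axis)
  then have "Ck_on k (UNIV \<times> D) (\<lambda>y::(real^3) \<times> (real^3). snd y $ 3)"
    by (simp add: Ck_inner)
  ultimately have "Ck_on k (UNIV \<times> D) (\<lambda>y. \<Delta> (fst y \<bullet> snd y) + B (snd y $ 3))"
    by (intro Ck_add[OF \<Omega>] Ck_compose[OF \<Omega> cD] Ck_compose[OF \<Omega> cB])
  then show "Ck_on k (UNIV \<times> D) (\<lambda>(M, g). \<Delta> (M \<bullet> g) + B (g$3))"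
    by (simp add: case_prod_beta')
qed

lemma casimir_candidate_partial:
  fixes \<beta> \<delta> \<Delta> B :: "real \<Rightarrow> real" and x :: "(real^3) \<times> (real^3)"
  assumes dD: "\<forall>s. (\<Delta> has_real_derivative 1 / \<delta> s) (at s)"
    and dB: "\<forall>t. (B has_real_derivative \<beta> t) (at t)"
  shows "pd j (\<lambda>(M, g). \<Delta> (M \<bullet> g) + B (g$3)) x
     = 1 / \<delta> (fst x \<bullet> snd x) * (fst x \<bullet> snd (e6 j) + fst (e6 j) \<bullet> snd x) + \<beta> (snd x $ 3) * snd (e6 j) $ 3"
proof -
  have i: "((\<lambda>y::(real^3) \<times> (real^3). fst y \<bullet> snd y) has_derivative (\<lambda>v. fst x \<bullet> snd v + fst v \<bullet> snd x)) (at x)"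
    by (intro derivative_intros)
  have a: "(\<Delta> has_derivative (*) (1 / \<delta> (fst x \<bullet> snd x))) (at (fst x \<bullet> snd x))"
    using dD by (simp add: has_field_derivative_def)
  have b: "(B has_derivative (*) (\<beta> (snd x $ 3))) (at (snd x $ 3))"
    using dB by (simp add: has_field_derivative_def)
  have "((\<lambda>y::(real^3) \<times> (real^3). \<Delta> (fst y \<bullet> snd y) + B (snd y $ 3)) has_derivative
     (\<lambda>v. 1 / \<delta> (fst x \<bullet> snd x) * (fst x \<bullet> snd v + fst v \<bullet> snd x) + \<beta> (snd x $ 3) * snd v $ 3)) (at x)"
    using has_derivative_add[OF diff_chain_at[OF i a] diff_chain_at[OF has_derivative_snd_component b]]
    by (simp add: o_def)
  then show ?thesis unfolding pd_def case_prod_beta' by (simp add: frechet_derivative_eq)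
qed

text \<open>Row-by-row check of \<Pi>_\<mu> \<nabla>C = 0: with \<mu>3 = \<beta>(\<gamma>3) \<delta>(M\<cdot>\<gamma>), the factor 1/\<delta> in \<nabla>C
  cancels \<delta> in \<mu>3.\<close>
lemma casimir_product:
  fixes D :: "(real^3) set" and mu3 :: "(real^3) \<times> real \<Rightarrow> real" and \<beta> \<delta> \<Delta> B :: "real \<Rightarrow> real"
  assumes D: "open D" and sb: "smooth_on UNIV \<beta>" and sd: "smooth_on UNIV \<delta>" and nz: "\<forall>s. \<delta> s \<noteq> 0"
    and dD: "\<forall>s. (\<Delta> has_real_derivative 1 / \<delta> s) (at s)"
    and dB: "\<forall>t. (B has_real_derivative \<beta> t) (at t)"
    and eq: "\<forall>g\<in>D. \<forall>s. mu3 (g, s) = \<beta> (g$3) * \<delta> s"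
  shows "casimir (mu_axial mu3) (UNIV \<times> D) (\<lambda>(M, g). \<Delta> (M \<bullet> g) + B (g$3))"
  unfolding casimir_def
proof (intro conjI ballI allI impI)
  show "smooth_on (UNIV \<times> D) (\<lambda>(M, g). \<Delta> (M \<bullet> g) + B (g$3))"
    by (rule casimir_candidate_smooth[OF D sb sd nz dD dB])
  fix x :: "(real^3) \<times> (real^3)" and i :: nat
  assume "x \<in> UNIV \<times> D" "i < 6"
  moreover have "\<delta> (fst x \<bullet> snd x) \<noteq> 0" using nz by blast
  ultimately show "(\<Sum>j<6. (Pi_mu (mu_axial mu3) x ! i ! j) * pd j (\<lambda>(M, g). \<Delta> (M \<bullet> g) + B (g$3)) x) = 0"
    using eq unfolding less6_cases Pi_mu_axial casimir_candidate_partial[OF dD dB]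
    by (auto simp: lessThan6 axial_matrix_def e6_simps inner_unit_vectors field_simps mem_Times_iff)
qed

theorem mainTheorem12:
  fixes D :: "(real^3) set" and mu3 :: "(real^3) \<times> real \<Rightarrow> real"
  assumes "open D" and "0 \<notin> D"
    and "smooth_on (D \<times> UNIV) mu3"
  shows "(defines_poisson (\<lambda>(M, g). vector [0, 0, mu3 (g, M \<bullet> g)]) (UNIV \<times> D) \<longleftrightarrow>
           (\<forall>g\<in>D. \<forall>s. g$1 * frechet_derivative mu3 (at (g, s)) (vector [0,1,0], 0)
                      - g$2 * frechet_derivative mu3 (at (g, s)) (vector [1,0,0], 0) = 0))
       \<and> (\<forall>\<beta> \<delta> \<Delta> B :: real \<Rightarrow> real.
            smooth_on UNIV \<beta> \<and> smooth_on UNIV \<delta> \<and> (\<forall>s. \<delta> s \<noteq> 0)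
            \<and> (\<forall>s. (\<Delta> has_real_derivative 1 / \<delta> s) (at s))
            \<and> (\<forall>t. (B has_real_derivative \<beta> t) (at t))
            \<and> (\<forall>g\<in>D. \<forall>s. mu3 (g, s) = \<beta> (g$3) * \<delta> s)
          \<longrightarrow> defines_poisson (\<lambda>(M, g). vector [0, 0, mu3 (g, M \<bullet> g)]) (UNIV \<times> D)
              \<and> casimir (\<lambda>(M, g). vector [0, 0, mu3 (g, M \<bullet> g)]) (UNIV \<times> D)
                  (\<lambda>(M, g). \<Delta> (M \<bullet> g) + B (g$3)))"
proof -
  have md: "\<And>g s. g \<in> D \<Longrightarrow> mu3 differentiable (at (g, s))"
    using smooth_on_differentiable[OF assms(3)] by simp
  note criterion = poisson_iff_angular_derivative_vanishes[OF assms(1,2) md]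
  have product: "defines_poisson (mu_axial mu3) (UNIV \<times> D)
      \<and> casimir (mu_axial mu3) (UNIV \<times> D) (\<lambda>(M, g). \<Delta> (M \<bullet> g) + B (g$3))"
    if "smooth_on UNIV \<beta>" "smooth_on UNIV \<delta>" "\<forall>s. \<delta> s \<noteq> 0"
      "\<forall>s. (\<Delta> has_real_derivative 1 / \<delta> s) (at s)" "\<forall>t. (B has_real_derivative \<beta> t) (at t)"
      "\<forall>g\<in>D. \<forall>s. mu3 (g, s) = \<beta> (g$3) * \<delta> s"
    for \<beta> \<delta> \<Delta> B :: "real \<Rightarrow> real"
    using criterion angular_derivative_product[OF assms(1) that(1,2,6)] casimir_product[OF assms(1) that]
    by blast
  show ?thesis
    using criterion product unfolding angular_derivative_def by blast
qed

end
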